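(* Let $\ell\colon X\times U\rightarrow\mathbb{R}$ and $g\colon X\times U\rightarrow \mathbb{R}^m$ be convex functions and let $f_d\colon X\times U\rightarrow X$ be an affine function. If $(U,G)\colon X\rightarrow X$ is the one-step bifunction in $\mathbf{Para}(\textnormal{\textbf{Conv}})$ generated by these functions, namely $G((u, x), x') = \ell(x,u) + \delta(x' \mid f_d(x,u)) + \delta(x,u \mid g(x,u) \leq 0)$, then the $N$-fold composite $(U,G)^N$ in $\mathbf{Para}(\textnormal{\textbf{Conv}})$ is the parameterized convex bifunction representation of the MPC optimization problem associated with $f_d, \ell$, and $g$ over a prediction horizon of $N$, i.e. $(U,G)^N((u_{N-1},\dots,u_0,x_0),x_N) = \inf_{x_1,\dots,x_{N-1}}\big[\sum_{i=0}^{N-1}\ell(x_i,u_i)+\delta(x_{i+1} \mid f_d(x_i,u_i)) + \delta(x_i,u_i \mid g(x_i,u_i)\leq 0)\big]$.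
   Context: $X,U$ are Euclidean spaces. A convex bifunction from $A$ to $B$ is a jointly convex function $A\times B\to\mathbb{R}\cup\{\pm\infty\}$; $\textnormal{\textbf{Conv}}$ is the symmetric monoidal category of Euclidean spaces and convex bifunctions, with composition $(G\circ F)(u,y)=\inf_x\{F(u,x)+G(x,y)\}$ and monoidal product given by direct sum on spaces and pointwise sum on bifunctions. $\mathbf{Para}(\textnormal{\textbf{Conv}})$ has morphisms $X\to Y$ given by pairs $(U,F)$ with $F$ a convex bifunction from $U\oplus X$ to $Y$; the composite of $(U_1,f)\colon X\to Y$ and $(U_2,g)\colon Y\to Z$ is $(U_2\oplus U_1, g\circ(\mathrm{id}_{U_2}\oplus f))$. $\delta(x'\mid y)$ is $0$ if $x'=y$ and $+\infty$ otherwise; $\delta(x,u\mid g(x,u)\le0)$ is the indicator of $\{(x,u):g(x,u)\le 0\}$. The MPC problem minimizes $\sum\ell(x_i,u_i)$ subject to $x_{i+1}=f_d(x_i,u_i)$ and $g(x_i,u_i)\le 0$ over the horizon. *)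

theory Defs
  imports "HOL-Analysis.Analysis" "HOL-Library.Extended_Real"
begin

text \<open>Convex bifunctions from A to B: functions A \<Rightarrow> B \<Rightarrow> ereal (curried).\<close>

definition delta :: "'a \<Rightarrow> 'a \<Rightarrow> ereal" where
  "delta x' y = (if x' = y then 0 else \<infinity>)"

definition conv_id :: "'a \<Rightarrow> 'a \<Rightarrow> ereal" where
  "conv_id = delta"

definition conv_comp :: "('b \<Rightarrow> 'c \<Rightarrow> ereal) \<Rightarrow> ('a \<Rightarrow> 'b \<Rightarrow> ereal) \<Rightarrow> 'a \<Rightarrow> 'c \<Rightarrow> ereal" where
  "conv_comp G F u y = (INF x. F u x + G x y)"

definition conv_tensor :: "('a \<Rightarrow> 'b \<Rightarrow> ereal) \<Rightarrow> ('c \<Rightarrow> 'd \<Rightarrow> ereal) \<Rightarrow> 'a \<times> 'c \<Rightarrow> 'b \<times> 'd \<Rightarrow> ereal" where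
  "conv_tensor F G p q = F (fst p) (fst q) + G (snd p) (snd q)"

text \<open>Composite in Para(Conv) of (U1,f): X \<rightarrow> Y and (U2,g): Y \<rightarrow> Z is
  (U2 \<oplus> U1, g o (id_U2 \<oplus> f)); the input ((u2,u1),x) of (U2\<oplus>U1)\<oplus>X is
  identified with (u2,(u1,x)) of U2\<oplus>(U1\<oplus>X) by the associator.\<close>
definition para_comp :: "(('u2 \<times> 'y) \<Rightarrow> 'z \<Rightarrow> ereal) \<Rightarrow> (('u1 \<times> 'x) \<Rightarrow> 'y \<Rightarrow> ereal)
    \<Rightarrow> (('u2 \<times> 'u1) \<times> 'x) \<Rightarrow> 'z \<Rightarrow> ereal" where
  "para_comp g f p z =
     conv_comp g (conv_tensor conv_id f) (fst (fst p), (snd (fst p), snd p)) z"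

text \<open>Its parameter space U \<oplus> (U \<oplus> ( ... )) is encoded as
  lists of length N, [u_{N-1}, ..., u_0] (head = parameter of the last factor).
  (U,G)^0 is the identity of Para(Conv) (trivial parameter space = the empty list);
  lists of the wrong length lie outside the parameter space and get value \<infinity>.\<close>
fun para_pow :: "(('u \<times> 'x) \<Rightarrow> 'x \<Rightarrow> ereal) \<Rightarrow> nat \<Rightarrow> ('u list \<times> 'x) \<Rightarrow> 'x \<Rightarrow> ereal" where
  "para_pow G 0 (us, x) x' = (if us = [] then conv_id x x' else \<infinity>)"
| "para_pow G (Suc n) (us, x) x' =
     (case us of [] \<Rightarrow> \<infinity>
      | u # us' \<Rightarrow> para_comp G (para_pow G n) ((u, us'), x) x')"

definition ineq_indicator :: "('x \<Rightarrow> 'u \<Rightarrow> real^'m) \<Rightarrow> 'x \<Rightarrow> 'u \<Rightarrow> ereal" where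
  "ineq_indicator g x u = (if (\<forall>i. g x u $ i \<le> 0) then 0 else \<infinity>)"

definition one_step :: "('x \<Rightarrow> 'u \<Rightarrow> real) \<Rightarrow> ('x \<times> 'u \<Rightarrow> 'x) \<Rightarrow> ('x \<Rightarrow> 'u \<Rightarrow> real^'m)
    \<Rightarrow> ('u \<times> 'x) \<Rightarrow> 'x \<Rightarrow> ereal" where
  "one_step l fd g p x' =
     ereal (l (snd p) (fst p)) + delta x' (fd (snd p, fst p)) + ineq_indicator g (snd p) (fst p)"

definition affine_fun :: "('a::real_vector \<Rightarrow> 'b::real_vector) \<Rightarrow> bool" where
  "affine_fun f \<longleftrightarrow> (\<exists>A c. linear A \<and> (\<forall>p. f p = A p + c))"

end

(* Composing with id \<oplus> G in Para(Conv) pins the new parameter and leaves an infimum over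
   the intermediate state: (U,G)^(n+1)((u,us,x0),x') = inf_y (U,G)^n((us,x0),y) + G((u,y),x').
   By induction on the horizon, the nested infima over the intermediate states merge into one
   infimum over whole trajectories; the only analytic input is that adding a constant other
   than -\<infinity> commutes with infima in the extended reals. *)

theory Submission
  imports Defs
begin

lemma INF_ereal_add_const:
  fixes c :: ereal
  assumes "c \<noteq> -\<infinity>"
  shows "(INF i\<in>I. f i + c) = (INF i\<in>I. f i) + c"
proof (cases c)
  case (real r)
  show ?thesis
  proof (rule antisym)
    have "(INF i\<in>I. f i + c) - c \<le> (INF i\<in>I. f i)"
    proof (rule INF_greatest)
      fix i assume "i \<in> I"
      then have "(INF i\<in>I. f i + c) \<le> f i + c" by (rule INF_lower)
      then show "(INF i\<in>I. f i + c) - c \<le> f i" using real by (simp add: ereal_minus_le_iff)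
    qed
    then show "(INF i\<in>I. f i + c) \<le> (INF i\<in>I. f i) + c"
      using real by (simp add: ereal_minus_le_iff)
    show "(INF i\<in>I. f i) + c \<le> (INF i\<in>I. f i + c)"
      by (rule INF_greatest) (intro add_right_mono INF_lower)
  qed
next
  case PInf
  then show ?thesis by (cases "I = {}") (simp_all add: top_ereal_def)
qed (use assms in simp)

lemma INF_delta_add: "(INF z. delta a z + h z) = (h a :: ereal)"
proof (rule antisym)
  show "(INF z. delta a z + h z) \<le> h a"
    by (rule INF_lower2[of a]) (simp_all add: delta_def)
  show "h a \<le> (INF z. delta a z + h z)"
    by (rule INF_greatest) (simp add: delta_def)
qed

lemma conv_comp_tensor_id:
  "conv_comp g (conv_tensor conv_id f) (u, w) z = (INF y. f w y + g (u, y) z)"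
proof -
  have "conv_comp g (conv_tensor conv_id f) (u, w) z
      = (INF a. INF y. delta u a + (f w y + g (a, y) z))"
    by (simp add: conv_comp_def conv_tensor_def conv_id_def INF_Sigma add.assoc)
  also have "\<dots> = (INF y. INF a. delta u a + (f w y + g (a, y) z))"
    by (rule INF_commute)
  finally show ?thesis
    by (simp add: INF_delta_add)
qed

lemma para_pow_Suc_Cons:
  "para_pow G (Suc n) (u # us, x) x' = (INF y. para_pow G n (us, x) y + G (u, y) x')"
  by (simp add: para_comp_def conv_comp_tensor_id)

lemma INF_trajectories_extend:
  fixes A :: "(nat \<Rightarrow> 'x) \<Rightarrow> ereal"
  assumes A_indep: "\<And>xs z. A (xs(Suc n := z)) = A xs"
    and c_finite_below: "\<And>y. c y \<noteq> -\<infinity>"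
  shows "(INF y. (INF xs\<in>{xs. xs 0 = x0 \<and> xs n = y}. A xs) + c y)
       = (INF xs\<in>{xs. xs 0 = x0 \<and> xs (Suc n) = z}. A xs + c (xs n))"
proof -
  have "(INF y. (INF xs\<in>{xs. xs 0 = x0 \<and> xs n = y}. A xs) + c y)
      = (INF y. INF xs\<in>{xs. xs 0 = x0 \<and> xs n = y}. A xs + c (xs n))"
    by (simp add: INF_ereal_add_const c_finite_below)
  also have "\<dots> = (INF xs\<in>{xs. xs 0 = x0}. A xs + c (xs n))"
  proof (rule antisym)
    show "(INF y. INF xs\<in>{xs. xs 0 = x0 \<and> xs n = y}. A xs + c (xs n))
        \<le> (INF xs\<in>{xs. xs 0 = x0}. A xs + c (xs n))"
    proof (rule INF_greatest)
      fix xs :: "nat \<Rightarrow> 'x" assume "xs \<in> {xs. xs 0 = x0}"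
      then show "(INF y. INF xs\<in>{xs. xs 0 = x0 \<and> xs n = y}. A xs + c (xs n)) \<le> A xs + c (xs n)"
        by (intro INF_lower2[of "xs n"] INF_lower) auto
    qed
    show "(INF xs\<in>{xs. xs 0 = x0}. A xs + c (xs n))
        \<le> (INF y. INF xs\<in>{xs. xs 0 = x0 \<and> xs n = y}. A xs + c (xs n))"
      by (intro INF_greatest INF_lower) auto
  qed
  also have "\<dots> = (INF xs\<in>(\<lambda>xs. xs(Suc n := z)) ` {xs. xs 0 = x0}. A xs + c (xs n))"
    by (simp add: image_comp A_indep)
  also have "(\<lambda>xs. xs(Suc n := z)) ` {xs. xs 0 = x0} = {xs. xs 0 = x0 \<and> xs (Suc n) = z}"
    by (auto intro!: image_eqI[where x = xs for xs] simp: fun_upd_idem)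
  finally show ?thesis .
qed

text \<open>The parameter list is stored last step first, so step \<open>i\<close> uses \<open>rev us ! i\<close>.\<close>

lemma para_pow_eq_INF_trajectories:
  fixes G :: "'u \<times> 'x \<Rightarrow> 'x \<Rightarrow> ereal"
  assumes "\<And>p x'. G p x' \<noteq> -\<infinity>"
  shows "para_pow G (length us) (us, x0) xN =
    (INF xs\<in>{xs. xs 0 = x0 \<and> xs (length us) = xN}.
       \<Sum>i<length us. G (rev us ! i, xs i) (xs (Suc i)))"
proof (induction us arbitrary: xN)
  case Nil
  show ?case
  proof (cases "xN = x0")
    case True
    have "{xs :: nat \<Rightarrow> 'x. xs 0 = x0} \<noteq> {}" by auto
    with True show ?thesis by (simp add: conv_id_def delta_def INF_const)
  next
    case False
    then have no_trajectory: "{xs. xs 0 = x0 \<and> xs 0 = xN} = {}" by auto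
    show ?thesis
      using False unfolding list.size(3) no_trajectory
      by (simp add: conv_id_def delta_def top_ereal_def)
  qed
next
  case (Cons u us)
  define n where "n = length us"
  define A where "A xs = (\<Sum>i<n. G (rev us ! i, xs i) (xs (Suc i)))" for xs :: "nat \<Rightarrow> _"
  have sum_snoc: "(\<Sum>i<Suc n. G (rev (u # us) ! i, xs i) (xs (Suc i)))
      = A xs + G (u, xs n) (xs (Suc n))" for xs
    by (simp add: A_def n_def nth_append)
  have "para_pow G (length (u # us)) (u # us, x0) xN
      = (INF y. (INF xs\<in>{xs. xs 0 = x0 \<and> xs n = y}. A xs) + G (u, y) xN)"
    unfolding length_Cons para_pow_Suc_Cons by (simp add: Cons.IH A_def n_def)
  also have "\<dots> = (INF xs\<in>{xs. xs 0 = x0 \<and> xs (Suc n) = xN}. A xs + G (u, xs n) xN)"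
    by (rule INF_trajectories_extend) (simp_all add: A_def assms)
  also have "\<dots> = (INF xs\<in>{xs. xs 0 = x0 \<and> xs (Suc n) = xN}.
       \<Sum>i<Suc n. G (rev (u # us) ! i, xs i) (xs (Suc i)))"
    by (rule INF_cong[OF refl]) (simp only: sum_snoc, simp)
  finally show ?case
    by (simp only: n_def length_Cons)
qed

text \<open>Only the absence of the value \<open>-\<infinity>\<close> in the one-step bifunction is used; convexity
  and affineness just guarantee that the composite stays in Conv.\<close>

theorem mainTheorem4:
  fixes l :: "'x::euclidean_space \<Rightarrow> 'u::euclidean_space \<Rightarrow> real"
    and g :: "'x \<Rightarrow> 'u \<Rightarrow> real^'m"
    and fd :: "'x \<times> 'u \<Rightarrow> 'x"
    and N :: nat and us :: "'u list" and x0 xN :: 'x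
  assumes "convex_on UNIV (\<lambda>p. l (fst p) (snd p))"
    and "\<And>i. convex_on UNIV (\<lambda>p. g (fst p) (snd p) $ i)"
    and "affine_fun fd"
    and "N \<ge> 1"
    and "length us = N"
  shows "para_pow (one_step l fd g) N (us, x0) xN =
    (INF xs \<in> {xs :: nat \<Rightarrow> 'x. xs 0 = x0 \<and> xs N = xN}.
       (\<Sum>i<N. ereal (l (xs i) (us ! (N - 1 - i))) + delta (xs (Suc i)) (fd (xs i, us ! (N - 1 - i)))
                + ineq_indicator g (xs i) (us ! (N - 1 - i))))"
proof -
  have one_step_finite_below: "one_step l fd g p x' \<noteq> -\<infinity>" for p x'
    by (simp add: one_step_def delta_def ineq_indicator_def)
  have "rev us ! i = us ! (N - 1 - i)" if "i < N" for i
    using that \<open>length us = N\<close> by (simp add: rev_nth Suc_diff_Suc)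
  then show ?thesis
    using para_pow_eq_INF_trajectories[of "one_step l fd g" us x0 xN, OF one_step_finite_below]
      \<open>length us = N\<close>
    by (simp add: one_step_def)
qed

end
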